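(* Let $N\ge 1$, let $q\in\mathbb{C}\setminus\{0,\pm1\}$ be generic (i.e. $q^k\neq 1$ for all integers $k>0$), and let $R\in Mat_{N\times N}(\mathbb{C})^{\otimes 2}$ be a skew-invertible Hecke $R$-matrix. Let $W(R)$ be the quantum Weyl algebra with generating matrices $M$ and $D$, and put $\hat L = MD$. Then for every integer $n\ge 1$ the following identity holds in $Mat_{N\times N}(\mathbb{C})^{\otimes n}\otimes W(R)$: $$\hat L_{\overline{1}} \left(\hat L_{\overline{2}} + \frac{J_{2}^{-1} -1}{q-q^{-1}}\right) \cdots \left(\hat L_{\overline{n}} + \frac{J_{n}^{-1} -1}{q-q^{-1}}\right) = M_{\overline{1}} \cdots M_{\overline{n}}\, D_{\overline{n}} \cdots D_{\overline{1}}\, J_{1}^{-1} \cdots J_{n}^{-1}.$$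
   Context: Notation: for a matrix $A\in Mat_{N\times N}(\mathbb{C})\otimes U$ (entries in some vector space/algebra $U$), $A_i=\mathbb{E}\otimes\cdots\otimes A\otimes\cdots\otimes\mathbb{E}$ (with $A$ in the $i$-th tensor factor, $\mathbb{E}$ the identity matrix elsewhere); for $R\in Mat_{N\times N}(\mathbb{C})^{\otimes 2}$, $R_{ij}$ denotes $R$ acting in tensor factors $i,j$, and $R_i=R_{i\,i+1}$. $P_{12}$ is the permutation matrix, $P_{kl}^{mn}=\delta_k^n\delta_l^m$, and $Tr_{(k)}$ is the trace in the $k$-th tensor factor. A skew-invertible Hecke $R$-matrix is an invertible $R\in Mat_{N\times N}(\mathbb{C})^{\otimes 2}$ satisfying $R_1R_2R_1=R_2R_1R_2$, $R^2=1+(q-q^{-1})R$, and for which there is a matrix $\Psi$ with $Tr_{(2)}(R_{12}\Psi_{23})=P_{13}=Tr_{(2)}(\Psi_{12}R_{23})$. For an $N\times N$ matrix $A$ put $A_{\overline{1}}=A_1$ and $A_{\overline{k}}=R_{k-1}\cdots R_1A_1R_1^{-1}\cdots R_{k-1}^{-1}$ for $k>1$. The Reflection Equation algebra $M(R)$ is the unital associative algebra generated by entries $m_i^j$ of $M=\|m_i^j\|_{1\le i,j\le N}$ subject to $R_{12}M_1R_{12}M_1=M_1R_{12}M_1R_{12}$; $D(R^{-1})$ is the analogous algebra generated by the entries of a matrix $D$ with $R$ replaced by $R^{-1}$. The quantum Weyl algebra $W(R)$ is the quotient of the free product of $M(R)$ and $D(R^{-1})$ by the relations $D_1M_{\overline{2}}=R_1^{-1}+M_{\overline{2}}D_1R_1^{-2}$.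 $\hat L=MD$ is the matrix product of $M$ and $D$. $J_1=1$ and $J_k=R_{k-1}\cdots R_2R_1^2R_2\cdots R_{k-1}$ for $k>1$ (images of the Jucys–Murphy elements of the Hecke algebra); in the formula, $1$ denotes the identity matrix. *)

theory Defs
  imports Complex_Main
begin

text \<open>Elements of Mat_{N x N}(C)^{(tensor n)} (tensor) U are represented as functions on
  pairs of multi-indices (row multi-index, column multi-index); multi-indices are lists of
  length n with entries < N.  Lower index = row, upper index = column, so that
  (A B)_i^k = sum_j A_i^j B_j^k.  Entries in U are multiplied in the order of the matrix
  product (U may be noncommutative).\<close>

type_synonym 'a tmat = "nat list \<Rightarrow> nat list \<Rightarrow> 'a"

definition idx :: "nat \<Rightarrow> nat \<Rightarrow> nat list set" where
  "idx N n = {xs. length xs = n \<and> set xs \<subseteq> {..<N}}"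

definition tmul :: "nat \<Rightarrow> nat \<Rightarrow> 'a::semiring_0 tmat \<Rightarrow> 'a tmat \<Rightarrow> 'a tmat" where
  "tmul N n X Y = (\<lambda>I K. \<Sum>J\<in>idx N n. X I J * Y J K)"

definition tid :: "'a::{zero,one} tmat" where
  "tid = (\<lambda>I J. if I = J then 1 else 0)"

definition tadd :: "'a::plus tmat \<Rightarrow> 'a tmat \<Rightarrow> 'a tmat" where
  "tadd X Y = (\<lambda>I J. X I J + Y I J)"

definition tminus :: "'a::minus tmat \<Rightarrow> 'a tmat \<Rightarrow> 'a tmat" where
  "tminus X Y = (\<lambda>I J. X I J - Y I J)"

definition tsmul :: "'a::times \<Rightarrow> 'a tmat \<Rightarrow> 'a tmat" where
  "tsmul c X = (\<lambda>I J. c * X I J)"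

definition tmap :: "('a \<Rightarrow> 'b) \<Rightarrow> 'a tmat \<Rightarrow> 'b tmat" where
  "tmap f X = (\<lambda>I J. f (X I J))"

definition teq :: "nat \<Rightarrow> nat \<Rightarrow> 'a tmat \<Rightarrow> 'a tmat \<Rightarrow> bool" where
  "teq N n X Y = (\<forall>I\<in>idx N n. \<forall>J\<in>idx N n. X I J = Y I J)"

definition tprod :: "nat \<Rightarrow> nat \<Rightarrow> 'a::semiring_1 tmat list \<Rightarrow> 'a tmat" where
  "tprod N n Xs = foldr (tmul N n) Xs tid"

text \<open>A_1 = A (tensor) E (tensor) ... (tensor) E  (A in the first tensor factor).\<close>
definition op1 :: "(nat \<Rightarrow> nat \<Rightarrow> 'a::zero) \<Rightarrow> 'a tmat" where
  "op1 A I J = (if tl I = tl J then A (hd I) (hd J) else 0)"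

text \<open>X acting in the tensor factors at 0-based positions k, k+1 (i.e. X_{k+1,k+2} in the
  1-based notation of the paper; so the paper's R_i is op2 R (i-1)).
  X i j k l = X_{ij}^{kl}, rows (i,j), columns (k,l).\<close>
definition op2 :: "(nat \<Rightarrow> nat \<Rightarrow> nat \<Rightarrow> nat \<Rightarrow> 'a::zero) \<Rightarrow> nat \<Rightarrow> 'a tmat" where
  "op2 X k I J = (if (\<forall>p<length I. p \<noteq> k \<and> p \<noteq> Suc k \<longrightarrow> I ! p = J ! p)
                  then X (I ! k) (I ! Suc k) (J ! k) (J ! Suc k) else 0)"

text \<open>A_{bar k} in Mat^{(tensor n)} (tensor) U (k 1-based):
  A_{bar 1} = A_1, A_{bar (k+1)} = R_k A_{bar k} R_k^{-1}.  Complex scalars are embedded by sc.\<close>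
fun bar :: "nat \<Rightarrow> nat \<Rightarrow> (complex \<Rightarrow> 'a::ring_1) \<Rightarrow> (nat \<Rightarrow> nat \<Rightarrow> nat \<Rightarrow> nat \<Rightarrow> complex)
             \<Rightarrow> (nat \<Rightarrow> nat \<Rightarrow> nat \<Rightarrow> nat \<Rightarrow> complex) \<Rightarrow> (nat \<Rightarrow> nat \<Rightarrow> 'a) \<Rightarrow> nat \<Rightarrow> 'a tmat" where
  "bar N n sc R Ri A 0 = tid"
| "bar N n sc R Ri A (Suc 0) = op1 A"
| "bar N n sc R Ri A (Suc (Suc k)) =
     tmul N n (tmap sc (op2 R k)) (tmul N n (bar N n sc R Ri A (Suc k)) (tmap sc (op2 Ri k)))"

text \<open>J_k^{-1} (k 1-based): J_1^{-1} = 1, J_{k+1}^{-1} = R_k^{-1} J_k^{-1} R_k^{-1},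
  the inverse of J_{k+1} = R_k J_k R_k = R_k ... R_2 R_1^2 R_2 ... R_k.\<close>
fun Jinv :: "nat \<Rightarrow> nat \<Rightarrow> (nat \<Rightarrow> nat \<Rightarrow> nat \<Rightarrow> nat \<Rightarrow> complex) \<Rightarrow> nat \<Rightarrow> complex tmat" where
  "Jinv N n Ri 0 = tid"
| "Jinv N n Ri (Suc 0) = tid"
| "Jinv N n Ri (Suc (Suc k)) = tmul N n (op2 Ri k) (tmul N n (Jinv N n Ri (Suc k)) (op2 Ri k))"

definition skew_inv_hecke ::
  "nat \<Rightarrow> complex \<Rightarrow> (nat \<Rightarrow> nat \<Rightarrow> nat \<Rightarrow> nat \<Rightarrow> complex) \<Rightarrow> (nat \<Rightarrow> nat \<Rightarrow> nat \<Rightarrow> nat \<Rightarrow> complex) \<Rightarrow> bool" where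
  "skew_inv_hecke N q R Ri \<longleftrightarrow>
     teq N 2 (tmul N 2 (op2 R 0) (op2 Ri 0)) tid \<and>
     teq N 2 (tmul N 2 (op2 Ri 0) (op2 R 0)) tid \<and>
     teq N 3 (tmul N 3 (op2 R 0) (tmul N 3 (op2 R 1) (op2 R 0)))
             (tmul N 3 (op2 R 1) (tmul N 3 (op2 R 0) (op2 R 1))) \<and>
     teq N 2 (tmul N 2 (op2 R 0) (op2 R 0)) (tadd tid (tsmul (q - inverse q) (op2 R 0))) \<and>
     (\<exists>\<Psi> :: nat \<Rightarrow> nat \<Rightarrow> nat \<Rightarrow> nat \<Rightarrow> complex.
        \<forall>i<N. \<forall>k<N. \<forall>l<N. \<forall>m<N.
          (\<Sum>j<N. \<Sum>b<N. R i j l b * \<Psi> b k j m) = (if i = m \<and> k = l then 1 else 0) \<and>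
          (\<Sum>j<N. \<Sum>b<N. \<Psi> i j l b * R b k j m) = (if i = m \<and> k = l then 1 else 0))"

text \<open>sc makes the ring 'a a unital associative C-algebra (unital ring hom into the centre).\<close>
definition complex_alg :: "(complex \<Rightarrow> 'a::ring_1) \<Rightarrow> bool" where
  "complex_alg sc \<longleftrightarrow> sc 1 = 1 \<and> (\<forall>x y. sc (x + y) = sc x + sc y) \<and>
     (\<forall>x y. sc (x * y) = sc x * sc y) \<and> (\<forall>x a. sc x * a = a * sc x)"

text \<open>Defining relations of the quantum Weyl algebra W(R) for matrices M, D with entries in 'a:
  reflection equation for M with R, for D with R^{-1}, and D_1 M_{bar 2} = R_1^{-1} + M_{bar 2} D_1 R_1^{-2}.\<close>
definition weyl_rel :: "nat \<Rightarrow> (complex \<Rightarrow> 'a::ring_1) \<Rightarrow> (nat \<Rightarrow> nat \<Rightarrow> nat \<Rightarrow> nat \<Rightarrow> complex)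
     \<Rightarrow> (nat \<Rightarrow> nat \<Rightarrow> nat \<Rightarrow> nat \<Rightarrow> complex) \<Rightarrow> (nat \<Rightarrow> nat \<Rightarrow> 'a) \<Rightarrow> (nat \<Rightarrow> nat \<Rightarrow> 'a) \<Rightarrow> bool" where
  "weyl_rel N sc R Ri M D \<longleftrightarrow>
     (let R1 = tmap sc (op2 R 0); Ri1 = tmap sc (op2 Ri 0); M1 = op1 M; D1 = op1 D;
          M2 = bar N 2 sc R Ri M 2 in
      teq N 2 (tmul N 2 R1 (tmul N 2 M1 (tmul N 2 R1 M1)))
              (tmul N 2 M1 (tmul N 2 R1 (tmul N 2 M1 R1))) \<and>
      teq N 2 (tmul N 2 Ri1 (tmul N 2 D1 (tmul N 2 Ri1 D1)))
              (tmul N 2 D1 (tmul N 2 Ri1 (tmul N 2 D1 Ri1))) \<and>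
      teq N 2 (tmul N 2 D1 M2)
              (tadd Ri1 (tmul N 2 M2 (tmul N 2 D1 (tmul N 2 Ri1 Ri1)))))"

end

(*
  Write lambda = q - q^-1 and Z_m = D_{bar m} ... D_{bar 1}.  The identity follows by induction
  on n from the exchange relation

    Z_m (L_{bar (m+1)} + (J_{m+1}^-1 - 1) / lambda) = L_{bar (m+1)} Z_m J_{m+1}^-1,

  from L_{bar k} = M_{bar k} D_{bar k}, and from the fact that J_{m+1}^-1 and the factor
  L_{bar (m+1)} + (J_{m+1}^-1 - 1) / lambda commute with J_1^-1 ... J_m^-1.  The exchange
  relation is proved by induction on m as well: conjugation by R_k R_{k+1} shifts the Weyl
  relation D_{bar 1} M_{bar 2} = R_1^-1 + M_{bar 2} D_{bar 1} R_1^-2 and the reflection equation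
  for D from the positions k, k+1 to k+1, k+2, and the Hecke relation in the form
  R = R^-1 + lambda cancels the correction term.

  Only the braid, Hecke and locality relations of the R_k enter, so the argument is carried out
  in an abstract algebra.  The tensor matrices of the statement form such an algebra once
  products are taken modulo the entries outside the genuine multi-indices.
*)

theory Submission
  imports Defs "HOL-Library.Function_Algebras"
begin

section \<open>An abstract algebra with Hecke generators\<close>

text \<open>In the tensor-matrix model the unit only acts as the projection nrm that discards the entries
  at non-genuine multi-indices, so nrm is part of the structure.\<close>

locale normalized_ring =
  fixes mul :: "'a::ab_group_add \<Rightarrow> 'a \<Rightarrow> 'a" (infixr "\<odot>" 70)
    and nrm :: "'a \<Rightarrow> 'a"
    and one :: 'a
  assumes mul_assoc [simp]: "(x \<odot> y) \<odot> z = x \<odot> (y \<odot> z)"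
    and mul_distrib_left: "x \<odot> (y + z) = x \<odot> y + x \<odot> z"
    and mul_distrib_right: "(x + y) \<odot> z = x \<odot> z + y \<odot> z"
    and nrm_mul [simp]: "nrm (x \<odot> y) = x \<odot> y"
    and mul_nrm_left [simp]: "nrm x \<odot> y = x \<odot> y"
    and mul_nrm_right [simp]: "x \<odot> nrm y = x \<odot> y"
    and one_mul [simp]: "one \<odot> x = nrm x"
    and mul_one [simp]: "x \<odot> one = nrm x"
    and nrm_add: "nrm (x + y) = nrm x + nrm y"
    and nrm_one [simp]: "nrm one = one"
begin

lemma mul_zero_right [simp]: "x \<odot> 0 = 0"
  by (metis add_cancel_right_right mul_distrib_left)

lemma mul_diff_left: "x \<odot> (y - z) = x \<odot> y - x \<odot> z"
  by (metis add_diff_cancel diff_add_cancel mul_distrib_left eq_diff_eq)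

lemma mul_diff_right: "(y - z) \<odot> x = y \<odot> x - z \<odot> x"
  by (metis add_diff_cancel diff_add_cancel mul_distrib_right eq_diff_eq)

lemma mul_eq_extend: "a \<odot> b = c \<Longrightarrow> a \<odot> b \<odot> z = c \<odot> z"
  by (metis mul_assoc)

definition commute :: "'a \<Rightarrow> 'a \<Rightarrow> bool" where
  "commute x y \<longleftrightarrow> x \<odot> y = y \<odot> x"

lemma commute_mul_extend: "commute x y \<Longrightarrow> x \<odot> y \<odot> z = y \<odot> x \<odot> z"
  unfolding commute_def by (metis mul_assoc)

lemma commute_sym: "commute x y \<Longrightarrow> commute y x"
  unfolding commute_def by simp

lemma commute_mul: "commute x y \<Longrightarrow> commute x z \<Longrightarrow> commute x (y \<odot> z)"
  unfolding commute_def by (metis mul_assoc)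

lemma commute_one: "nrm x = x \<Longrightarrow> commute x one"
  unfolding commute_def by simp

lemma commute_add: "commute x z \<Longrightarrow> commute y z \<Longrightarrow> commute (x + y) z"
  unfolding commute_def by (simp add: mul_distrib_left mul_distrib_right)

lemma commute_diff: "commute x z \<Longrightarrow> commute y z \<Longrightarrow> commute (x - y) z"
  unfolding commute_def by (simp add: mul_diff_left mul_diff_right)

definition prodl :: "'a list \<Rightarrow> 'a" where
  "prodl xs = foldr (\<odot>) xs one"

lemma prodl_Nil [simp]: "prodl [] = one"
  and prodl_Cons [simp]: "prodl (x # xs) = x \<odot> prodl xs"
  unfolding prodl_def by simp_all

lemma nrm_prodl [simp]: "nrm (prodl xs) = prodl xs"
  by (cases xs) auto

lemma prodl_snoc: "nrm x = x \<Longrightarrow> prodl (xs @ [x]) = prodl xs \<odot> x"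
  by (induction xs) auto

lemma commute_prodl: "nrm y = y \<Longrightarrow> (\<And>x. x \<in> set xs \<Longrightarrow> commute y x) \<Longrightarrow> commute y (prodl xs)"
  by (induction xs) (auto intro: commute_mul commute_one)

end

text \<open>r k and ri k model R_{k+1} and its inverse, acting in the tensor factors k + 1 and k + 2
  out of n; lam models q - q^-1.\<close>

locale hecke_generators = normalized_ring +
  fixes n :: nat and r ri :: "nat \<Rightarrow> 'a" and lam :: 'a
  assumes nrm_r [simp]: "nrm (r k) = r k"
    and nrm_ri [simp]: "nrm (ri k) = ri k"
    and nrm_lam [simp]: "nrm lam = lam"
    and r_ri [simp]: "k + 2 \<le> n \<Longrightarrow> r k \<odot> ri k = one"
    and ri_r [simp]: "k + 2 \<le> n \<Longrightarrow> ri k \<odot> r k = one"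
    and hecke: "k + 2 \<le> n \<Longrightarrow> r k \<odot> r k = one + lam \<odot> r k"
    and braid: "k + 3 \<le> n \<Longrightarrow> r k \<odot> r (Suc k) \<odot> r k = r (Suc k) \<odot> r k \<odot> r (Suc k)"
    and far_commute: "i + 2 \<le> j \<Longrightarrow> j + 2 \<le> n \<Longrightarrow> r i \<odot> r j = r j \<odot> r i"
begin

lemma r_ri_cancel [simp]: "k + 2 \<le> n \<Longrightarrow> r k \<odot> ri k \<odot> z = nrm z"
  and ri_r_cancel [simp]: "k + 2 \<le> n \<Longrightarrow> ri k \<odot> r k \<odot> z = nrm z"
  using mul_eq_extend[OF r_ri] mul_eq_extend[OF ri_r] by simp_all

lemma braid_extend:
  "k + 3 \<le> n \<Longrightarrow> r k \<odot> r (Suc k) \<odot> r k \<odot> z = r (Suc k) \<odot> r k \<odot> r (Suc k) \<odot> z"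
  using mul_eq_extend[OF braid] by simp

lemma braid_ri:
  assumes "k + 3 \<le> n"
  shows "ri k \<odot> ri (Suc k) \<odot> ri k = ri (Suc k) \<odot> ri k \<odot> ri (Suc k)"
proof -
  have "ri k \<odot> ri (Suc k) \<odot> ri k
      = ri k \<odot> ri (Suc k) \<odot> ri k \<odot> r (Suc k) \<odot> r k \<odot> r (Suc k) \<odot> ri (Suc k) \<odot> ri k \<odot> ri (Suc k)"
    using assms by simp
  also have "\<dots> = ri k \<odot> ri (Suc k) \<odot> ri k \<odot> r k \<odot> r (Suc k) \<odot> r k \<odot> ri (Suc k) \<odot> ri k \<odot> ri (Suc k)"
    by (simp only: braid_extend[OF assms])
  also have "\<dots> = ri (Suc k) \<odot> ri k \<odot> ri (Suc k)"
    using assms by simp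
  finally show ?thesis .
qed

lemma braid_mixed_up:
  assumes "k + 3 \<le> n"
  shows "r (Suc k) \<odot> ri k \<odot> ri (Suc k) = ri k \<odot> ri (Suc k) \<odot> r k"
proof -
  have "ri k \<odot> ri (Suc k) \<odot> r k
      = ri k \<odot> ri (Suc k) \<odot> r k \<odot> r (Suc k) \<odot> r k \<odot> ri k \<odot> ri (Suc k)"
    using assms by simp
  also have "\<dots> = ri k \<odot> ri (Suc k) \<odot> r (Suc k) \<odot> r k \<odot> r (Suc k) \<odot> ri k \<odot> ri (Suc k)"
    by (simp only: braid_extend[OF assms])
  also have "\<dots> = r (Suc k) \<odot> ri k \<odot> ri (Suc k)"
    using assms by simp
  finally show ?thesis by simp
qed

lemma braid_mixed_down:
  assumes "k + 3 \<le> n"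
  shows "r k \<odot> ri (Suc k) \<odot> ri k = ri (Suc k) \<odot> ri k \<odot> r (Suc k)"
proof -
  have "ri (Suc k) \<odot> ri k \<odot> r (Suc k)
      = ri (Suc k) \<odot> ri k \<odot> r (Suc k) \<odot> r k \<odot> r (Suc k) \<odot> ri (Suc k) \<odot> ri k"
    using assms by simp
  also have "\<dots> = ri (Suc k) \<odot> ri k \<odot> r k \<odot> r (Suc k) \<odot> r k \<odot> ri (Suc k) \<odot> ri k"
    by (simp only: braid_extend[OF assms])
  also have "\<dots> = r k \<odot> ri (Suc k) \<odot> ri k"
    using assms by simp
  finally show ?thesis by simp
qed

lemma r_eq_ri_plus_lam: "k + 2 \<le> n \<Longrightarrow> r k = ri k + lam"
proof -
  assume k: "k + 2 \<le> n"
  have "r k = (r k \<odot> r k) \<odot> ri k"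
    using k by simp
  also have "\<dots> = ri k + lam"
    using k by (simp add: hecke mul_distrib_right)
  finally show ?thesis .
qed

lemma commute_ri: "commute x (r k) \<Longrightarrow> k + 2 \<le> n \<Longrightarrow> commute x (ri k)"
proof -
  assume c: "commute x (r k)" and k: "k + 2 \<le> n"
  have "x \<odot> ri k = ri k \<odot> r k \<odot> x \<odot> ri k"
    using k by simp
  also have "\<dots> = ri k \<odot> x"
    using k by (simp add: commute_mul_extend[OF c, symmetric])
  finally show ?thesis
    unfolding commute_def by simp
qed

lemma commute_r_far: "i + 2 \<le> j \<Longrightarrow> j + 2 \<le> n \<Longrightarrow> commute (r i) (r j)"
  unfolding commute_def by (rule far_commute)

lemma commute_r_ri_far: "i + 2 \<le> j \<Longrightarrow> j + 2 \<le> n \<Longrightarrow> commute (r i) (ri j)"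
  by (rule commute_ri[OF commute_r_far]) auto

lemma commute_ri_r_far: "i + 2 \<le> j \<Longrightarrow> j + 2 \<le> n \<Longrightarrow> commute (r j) (ri i)"
  by (rule commute_ri[OF commute_sym[OF commute_r_far]]) auto

lemma commute_r_braid_conj:
  assumes "commute y (r (Suc k))" "k + 3 \<le> n"
  shows "commute (r k) (r (Suc k) \<odot> r k \<odot> y \<odot> ri k \<odot> ri (Suc k))"
proof -
  have "r k \<odot> r (Suc k) \<odot> r k \<odot> y \<odot> ri k \<odot> ri (Suc k)
      = r (Suc k) \<odot> r k \<odot> r (Suc k) \<odot> y \<odot> ri k \<odot> ri (Suc k)"
    by (simp only: braid_extend[OF assms(2)])
  also have "\<dots> = r (Suc k) \<odot> r k \<odot> y \<odot> r (Suc k) \<odot> ri k \<odot> ri (Suc k)"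
    by (simp only: commute_mul_extend[OF commute_sym[OF assms(1)]])
  also have "\<dots> = r (Suc k) \<odot> r k \<odot> y \<odot> ri k \<odot> ri (Suc k) \<odot> r k"
    by (simp only: braid_mixed_up[OF assms(2)])
  finally show ?thesis
    unfolding commute_def by simp
qed

lemma commute_ri_braid_conj:
  assumes "commute y (r (Suc k))" "k + 3 \<le> n"
  shows "commute (r k) (ri (Suc k) \<odot> ri k \<odot> y \<odot> ri k \<odot> ri (Suc k))"
proof -
  have "r k \<odot> ri (Suc k) \<odot> ri k \<odot> y \<odot> ri k \<odot> ri (Suc k)
      = ri (Suc k) \<odot> ri k \<odot> r (Suc k) \<odot> y \<odot> ri k \<odot> ri (Suc k)"
    using mul_eq_extend[OF braid_mixed_down[OF assms(2)]] by simp
  also have "\<dots> = ri (Suc k) \<odot> ri k \<odot> y \<odot> r (Suc k) \<odot> ri k \<odot> ri (Suc k)"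
    by (simp only: commute_mul_extend[OF commute_sym[OF assms(1)]])
  also have "\<dots> = ri (Suc k) \<odot> ri k \<odot> y \<odot> ri k \<odot> ri (Suc k) \<odot> r k"
    by (simp only: braid_mixed_up[OF assms(2)])
  finally show ?thesis
    unfolding commute_def by simp
qed

fun barred :: "'a \<Rightarrow> nat \<Rightarrow> 'a" where
  "barred x 0 = one"
| "barred x (Suc 0) = x"
| "barred x (Suc (Suc k)) = r k \<odot> barred x (Suc k) \<odot> ri k"

fun jm_inv :: "nat \<Rightarrow> 'a" where
  "jm_inv 0 = one"
| "jm_inv (Suc 0) = one"
| "jm_inv (Suc (Suc k)) = ri k \<odot> jm_inv (Suc k) \<odot> ri k"

definition first_factor :: "'a \<Rightarrow> bool" where
  "first_factor x \<longleftrightarrow> nrm x = x \<and> (\<forall>j. 1 \<le> j \<longrightarrow> j + 2 \<le> n \<longrightarrow> commute x (r j))"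

lemma nrm_barred [simp]: "nrm x = x \<Longrightarrow> nrm (barred x k) = barred x k"
  by (induction x k rule: barred.induct) auto

lemma nrm_jm_inv [simp]: "nrm (jm_inv k) = jm_inv k"
  by (cases k rule: jm_inv.cases) auto

lemma first_factor_mul: "first_factor x \<Longrightarrow> first_factor y \<Longrightarrow> first_factor (x \<odot> y)"
  unfolding first_factor_def by (auto intro: commute_sym[OF commute_mul] commute_sym)

lemma barred_mul: "k \<le> n \<Longrightarrow> barred (x \<odot> y) k = barred x k \<odot> barred y k"
  by (induction x k rule: barred.induct) auto

lemma commute_barred_r_above:
  "first_factor x \<Longrightarrow> 1 \<le> k \<Longrightarrow> k \<le> j \<Longrightarrow> j + 2 \<le> n \<Longrightarrow> commute (barred x k) (r j)"
proof (induction x k rule: barred.induct)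
  case (3 x k)
  have c1: "commute (r j) (r k)"
    using "3.prems" by (intro commute_sym[OF commute_r_far]) auto
  have c2: "commute (r j) (barred x (Suc k))"
    using "3.prems" by (intro commute_sym[OF "3.IH"]) auto
  have c3: "commute (r j) (ri k)"
    using "3.prems" by (intro commute_ri_r_far) auto
  show ?case
    by (simp only: barred.simps, rule commute_sym, intro commute_mul c1 c2 c3)
qed (auto simp: first_factor_def)

lemma commute_barred_r_below:
  "first_factor x \<Longrightarrow> j + 3 \<le> k \<Longrightarrow> k \<le> n \<Longrightarrow> commute (barred x k) (r j)"
proof (induction x k rule: barred.induct)
  case (3 x k)
  show ?case
  proof (cases "j + 3 \<le> Suc k")
    case True
    have c1: "commute (r j) (r k)"
      using "3.prems" True by (intro commute_r_far) auto
    have c2: "commute (r j) (barred x (Suc k))"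
      using "3.prems" True by (intro commute_sym[OF "3.IH"]) auto
    have c3: "commute (r j) (ri k)"
      using "3.prems" True by (intro commute_r_ri_far) auto
    show ?thesis
      by (simp only: barred.simps, rule commute_sym, intro commute_mul c1 c2 c3)
  next
    case False
    then have k: "k = Suc j"
      using "3.prems" by simp
    have "commute (barred x (Suc j)) (r (Suc j))"
      using "3.prems" k by (intro commute_barred_r_above) auto
    from commute_r_braid_conj[OF this] show ?thesis
      using "3.prems" k by (simp add: commute_def)
  qed
qed auto

lemma commute_jm_inv_r_above:
  "k \<le> j \<Longrightarrow> j + 2 \<le> n \<Longrightarrow> commute (jm_inv k) (r j)"
proof (induction k rule: jm_inv.induct)
  case (3 k)
  have c1: "commute (r j) (ri k)"
    using "3.prems" by (intro commute_ri_r_far) auto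
  have c2: "commute (r j) (jm_inv (Suc k))"
    using "3.prems" by (intro commute_sym[OF "3.IH"]) auto
  show ?case
    by (simp only: jm_inv.simps, rule commute_sym, intro commute_mul c1 c2)
qed (simp_all add: commute_def)

lemma commute_jm_inv_r_below:
  "j + 3 \<le> k \<Longrightarrow> k \<le> n \<Longrightarrow> commute (jm_inv k) (r j)"
proof (induction k rule: jm_inv.induct)
  case (3 k)
  show ?case
  proof (cases "j + 3 \<le> Suc k")
    case True
    have c1: "commute (r j) (ri k)"
      using "3.prems" True by (intro commute_r_ri_far) auto
    have c2: "commute (r j) (jm_inv (Suc k))"
      using "3.prems" True by (intro commute_sym[OF "3.IH"]) auto
    show ?thesis
      by (simp only: jm_inv.simps, rule commute_sym, intro commute_mul c1 c2)
  next
    case False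
    then have k: "k = Suc j"
      using "3.prems" by simp
    have "commute (jm_inv (Suc j)) (r (Suc j))"
      using "3.prems" k by (intro commute_jm_inv_r_above) auto
    from commute_ri_braid_conj[OF this] show ?thesis
      using "3.prems" k by (simp add: commute_def)
  qed
qed auto

lemma commute_jm_inv:
  assumes "nrm y = y" "\<And>j. j + 2 \<le> k \<Longrightarrow> commute y (r j)" "k \<le> n"
  shows "commute y (jm_inv k)"
  using assms
proof (induction k rule: jm_inv.induct)
  case (3 k)
  have "commute y (ri k)"
    using 3 by (intro commute_ri) auto
  then show ?case
    using 3 by (auto intro: commute_mul)
qed (auto intro: commute_one)

text \<open>Conjugation by R_{a+1} R_{a+2} moves relations between the positions a + 1, a + 2 one step
  to the right.\<close>

definition shift :: "nat \<Rightarrow> 'a \<Rightarrow> 'a" where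
  "shift a x = r a \<odot> r (Suc a) \<odot> x \<odot> ri (Suc a) \<odot> ri a"

lemma shift_mul: "a + 3 \<le> n \<Longrightarrow> shift a (x \<odot> y) = shift a x \<odot> shift a y"
  unfolding shift_def by simp

lemma shift_add: "shift a (x + y) = shift a x + shift a y"
  unfolding shift_def by (simp add: mul_distrib_left mul_distrib_right)

lemma shift_ri: "a + 3 \<le> n \<Longrightarrow> shift a (ri a) = ri (Suc a)"
proof -
  assume a: "a + 3 \<le> n"
  have "shift a (ri a) = r a \<odot> r (Suc a) \<odot> ri a \<odot> ri (Suc a) \<odot> ri a"
    unfolding shift_def by simp
  also have "\<dots> = r a \<odot> r (Suc a) \<odot> ri (Suc a) \<odot> ri a \<odot> ri (Suc a)"
    by (simp only: braid_ri[OF a])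
  also have "\<dots> = ri (Suc a)"
    using a by simp
  finally show ?thesis .
qed

lemma shift_barred_Suc:
  assumes "first_factor x" "a + 3 \<le> n"
  shows "shift a (barred x (Suc a)) = barred x (Suc (Suc a))"
proof -
  have c: "commute (barred x (Suc a)) (r (Suc a))"
    using assms by (intro commute_barred_r_above) auto
  show ?thesis
    using assms(2) unfolding shift_def by (simp add: commute_mul_extend[OF commute_sym[OF c]])
qed

lemma shift_barred_Suc_Suc:
  assumes "first_factor x" "a + 3 \<le> n"
  shows "shift a (barred x (Suc (Suc a))) = barred x (Suc (Suc (Suc a)))"
proof -
  have c: "commute (barred x (Suc a)) (r (Suc a))"
    using assms by (intro commute_barred_r_above) auto
  have "shift a (barred x (Suc (Suc a)))
      = r a \<odot> r (Suc a) \<odot> r a \<odot> barred x (Suc a) \<odot> ri a \<odot> ri (Suc a) \<odot> ri a"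
    unfolding shift_def by simp
  also have "\<dots> = r (Suc a) \<odot> r a \<odot> r (Suc a) \<odot> barred x (Suc a) \<odot> ri (Suc a) \<odot> ri a \<odot> ri (Suc a)"
    by (simp only: braid_extend[OF assms(2)] braid_ri[OF assms(2)])
  also have "\<dots> = r (Suc a) \<odot> r a \<odot> barred x (Suc a) \<odot> r (Suc a) \<odot> ri (Suc a) \<odot> ri a \<odot> ri (Suc a)"
    by (simp only: commute_mul_extend[OF commute_sym[OF c]])
  also have "\<dots> = barred x (Suc (Suc (Suc a)))"
    using assms(2) by simp
  finally show ?thesis .
qed

end

text \<open>M1 and D1 model M_1 and D_1, and cc models 1 / (q - q^-1).\<close>

locale quantum_weyl = hecke_generators +
  fixes M1 D1 cc :: 'a
  assumes first_factor_M1: "first_factor M1"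
    and first_factor_D1: "first_factor D1"
    and nrm_cc [simp]: "nrm cc = cc"
    and cc_central: "cc \<odot> x = x \<odot> cc"
    and cc_lam: "cc \<odot> lam = one"
    and reflection_D: "2 \<le> n \<Longrightarrow> ri 0 \<odot> D1 \<odot> ri 0 \<odot> D1 = D1 \<odot> ri 0 \<odot> D1 \<odot> ri 0"
    and weyl: "2 \<le> n \<Longrightarrow> D1 \<odot> barred M1 2 = ri 0 + barred M1 2 \<odot> D1 \<odot> ri 0 \<odot> ri 0"
begin

lemma nrm_M1 [simp]: "nrm M1 = M1" and nrm_D1 [simp]: "nrm D1 = D1"
  using first_factor_M1 first_factor_D1 unfolding first_factor_def by simp_all

lemma weyl_barred:
  "a + 2 \<le> n \<Longrightarrow> barred D1 (Suc a) \<odot> barred M1 (Suc (Suc a))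
     = ri a + barred M1 (Suc (Suc a)) \<odot> barred D1 (Suc a) \<odot> ri a \<odot> ri a"
proof (induction a)
  case 0
  then show ?case
    using weyl by (simp add: numeral_2_eq_2)
next
  case (Suc a)
  then have "shift a (barred D1 (Suc a) \<odot> barred M1 (Suc (Suc a)))
      = shift a (ri a + barred M1 (Suc (Suc a)) \<odot> barred D1 (Suc a) \<odot> ri a \<odot> ri a)"
    by simp
  then show ?case
    using Suc.prems first_factor_M1 first_factor_D1
    by (simp add: shift_mul shift_add shift_ri shift_barred_Suc shift_barred_Suc_Suc
        del: mul_assoc barred.simps)
qed

lemma reflection_D_barred:
  "a + 2 \<le> n \<Longrightarrow> ri a \<odot> barred D1 (Suc a) \<odot> ri a \<odot> barred D1 (Suc a)
     = barred D1 (Suc a) \<odot> ri a \<odot> barred D1 (Suc a) \<odot> ri a"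
proof (induction a)
  case 0
  then show ?case
    using reflection_D by simp
next
  case (Suc a)
  then have "shift a (ri a \<odot> barred D1 (Suc a) \<odot> ri a \<odot> barred D1 (Suc a))
      = shift a (barred D1 (Suc a) \<odot> ri a \<odot> barred D1 (Suc a) \<odot> ri a)"
    by simp
  then show ?case
    using Suc.prems first_factor_D1
    by (simp add: shift_mul shift_ri shift_barred_Suc del: mul_assoc barred.simps)
qed

primrec Dprod :: "nat \<Rightarrow> 'a" where
  "Dprod 0 = one"
| "Dprod (Suc m) = barred D1 (Suc m) \<odot> Dprod m"

lemma nrm_Dprod [simp]: "nrm (Dprod m) = Dprod m"
  by (cases m) auto

lemma Dprod_eq_prodl: "Dprod m = prodl (map (barred D1) (rev [1..<m+1]))"
  by (induction m) auto

lemma commute_Dprod_r: "m \<le> j \<Longrightarrow> j + 2 \<le> n \<Longrightarrow> commute (Dprod m) (r j)"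
proof (induction m)
  case (Suc m)
  have "commute (r j) (barred D1 (Suc m))"
    using Suc.prems first_factor_D1 by (intro commute_sym[OF commute_barred_r_above]) auto
  moreover have "commute (r j) (Dprod m)"
    using Suc by (intro commute_sym[OF Suc.IH]) auto
  ultimately show ?case
    by (simp add: commute_sym commute_mul)
qed (simp add: commute_def)

definition Lfactor :: "nat \<Rightarrow> 'a" where
  "Lfactor k = barred (M1 \<odot> D1) k + cc \<odot> (jm_inv k - one)"

lemma nrm_Lfactor [simp]: "nrm (Lfactor k) = Lfactor k"
  unfolding Lfactor_def by (simp add: nrm_add)

lemma exchange_step_rhs:
  assumes a: "a + 2 \<le> n"
  shows "barred (M1 \<odot> D1) (Suc (Suc a)) \<odot> Dprod (Suc a) \<odot> jm_inv (Suc (Suc a))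
       = barred M1 (Suc (Suc a)) \<odot> barred D1 (Suc a) \<odot> ri a \<odot> barred D1 (Suc a) \<odot>
           Dprod a \<odot> jm_inv (Suc a) \<odot> ri a"
proof -
  let ?A = "barred D1 (Suc a)" and ?P = "barred M1 (Suc (Suc a))"
  let ?Z = "Dprod a" and ?J = "jm_inv (Suc a)"
  have "commute ?Z (ri a)"
    using a by (intro commute_ri commute_Dprod_r) auto
  note Z_ri = commute_mul_extend[OF this]
  have reflection: "?A \<odot> ri a \<odot> ?A \<odot> ri a \<odot> w = ri a \<odot> ?A \<odot> ri a \<odot> ?A \<odot> w" for w
    using mul_eq_extend[OF reflection_D_barred[OF a, symmetric]] by simp
  have "barred (M1 \<odot> D1) (Suc (Suc a)) \<odot> Dprod (Suc a) \<odot> jm_inv (Suc (Suc a))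
      = ?P \<odot> r a \<odot> ?A \<odot> ri a \<odot> ?A \<odot> ?Z \<odot> ri a \<odot> ?J \<odot> ri a"
    using a by (simp add: barred_mul)
  also have "\<dots> = ?P \<odot> r a \<odot> ?A \<odot> ri a \<odot> ?A \<odot> ri a \<odot> ?Z \<odot> ?J \<odot> ri a"
    by (simp only: Z_ri)
  also have "\<dots> = ?P \<odot> r a \<odot> ri a \<odot> ?A \<odot> ri a \<odot> ?A \<odot> ?Z \<odot> ?J \<odot> ri a"
    by (simp only: reflection)
  also have "\<dots> = ?P \<odot> ?A \<odot> ri a \<odot> ?A \<odot> ?Z \<odot> ?J \<odot> ri a"
    using a by simp
  finally show ?thesis .
qed

lemma cc_mul_extend: "x \<odot> cc \<odot> y = cc \<odot> x \<odot> y"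
  using mul_eq_extend[OF cc_central[symmetric]] by simp

lemma cc_lam_cancel: "cc \<odot> x \<odot> lam \<odot> w = x \<odot> w"
proof -
  have "cc \<odot> x \<odot> lam \<odot> w = x \<odot> cc \<odot> lam \<odot> w"
    by (simp add: cc_mul_extend)
  then show ?thesis
    using mul_eq_extend[OF cc_lam, of w] by simp
qed

lemma weyl_expand:
  assumes a: "a + 2 \<le> n"
  shows "barred D1 (Suc a) \<odot> r a \<odot> barred (M1 \<odot> D1) (Suc a) \<odot> w
       = barred D1 (Suc a) \<odot> w +
         barred M1 (Suc (Suc a)) \<odot> barred D1 (Suc a) \<odot> ri a \<odot> barred D1 (Suc a) \<odot> w"
proof -
  have "barred D1 (Suc a) \<odot> r a \<odot> barred (M1 \<odot> D1) (Suc a) \<odot> w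
      = (barred D1 (Suc a) \<odot> barred M1 (Suc (Suc a))) \<odot> (r a \<odot> barred D1 (Suc a) \<odot> w)"
    using a by (simp add: barred_mul)
  also have "\<dots> = barred D1 (Suc a) \<odot> w +
      barred M1 (Suc (Suc a)) \<odot> barred D1 (Suc a) \<odot> ri a \<odot> barred D1 (Suc a) \<odot> w"
    unfolding weyl_barred[OF a] using a by (simp add: mul_distrib_right)
  finally show ?thesis .
qed

lemma exchange_step_lhs:
  assumes a: "a + 2 \<le> n"
    and IH: "Dprod a \<odot> Lfactor (Suc a) = barred (M1 \<odot> D1) (Suc a) \<odot> Dprod a \<odot> jm_inv (Suc a)"
  shows "Dprod (Suc a) \<odot> Lfactor (Suc (Suc a))
       = barred M1 (Suc (Suc a)) \<odot> barred D1 (Suc a) \<odot> ri a \<odot> barred D1 (Suc a) \<odot>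
           Dprod a \<odot> jm_inv (Suc a) \<odot> ri a"
proof -
  define A where "A = barred D1 (Suc a)"
  define P where "P = barred M1 (Suc (Suc a))"
  define L where "L = barred (M1 \<odot> D1) (Suc a)"
  define Z where "Z = Dprod a"
  define J where "J = jm_inv (Suc a)"
  have [simp]: "nrm A = A" "nrm Z = Z"
    unfolding A_def Z_def by simp_all
  have "commute Z (r a)"
    unfolding Z_def using a by (intro commute_Dprod_r) auto
  note Z_r = commute_mul_extend[OF this]
  have ZL: "Z \<odot> L \<odot> w = (L \<odot> Z \<odot> J - cc \<odot> (Z \<odot> J - Z)) \<odot> w" for w
  proof -
    have "Z \<odot> Lfactor (Suc a) = Z \<odot> L + cc \<odot> (Z \<odot> J - Z)"
      unfolding Lfactor_def L_def J_def Z_def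
      by (simp add: mul_distrib_left mul_diff_left cc_mul_extend cc_central)
    then have "Z \<odot> L = L \<odot> Z \<odot> J - cc \<odot> (Z \<odot> J - Z)"
      using IH unfolding Z_def L_def J_def by (simp add: eq_diff_eq)
    then show ?thesis
      by (metis mul_assoc)
  qed
  have AL: "A \<odot> r a \<odot> L \<odot> w = A \<odot> w + P \<odot> A \<odot> ri a \<odot> A \<odot> w" for w
    unfolding A_def P_def L_def by (rule weyl_expand[OF a])
  have hecke_split: "A \<odot> Z \<odot> r a \<odot> J \<odot> ri a = A \<odot> Z \<odot> ri a \<odot> J \<odot> ri a + A \<odot> Z \<odot> lam \<odot> J \<odot> ri a"
    using a by (simp add: r_eq_ri_plus_lam mul_distrib_left mul_distrib_right)
  have "Dprod (Suc a) \<odot> Lfactor (Suc (Suc a))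
      = A \<odot> Z \<odot> r a \<odot> L \<odot> ri a + cc \<odot> (A \<odot> Z \<odot> ri a \<odot> J \<odot> ri a - A \<odot> Z)"
    unfolding Lfactor_def A_def Z_def L_def J_def
    by (simp add: mul_distrib_left mul_diff_left cc_mul_extend cc_central)
  also have "A \<odot> Z \<odot> r a \<odot> L \<odot> ri a
      = A \<odot> r a \<odot> L \<odot> Z \<odot> J \<odot> ri a - cc \<odot> (A \<odot> r a \<odot> Z \<odot> J \<odot> ri a - A \<odot> r a \<odot> Z \<odot> ri a)"
    by (simp only: Z_r ZL)
      (simp add: mul_distrib_left mul_distrib_right mul_diff_left mul_diff_right cc_mul_extend)
  also have "\<dots> = A \<odot> Z \<odot> J \<odot> ri a + P \<odot> A \<odot> ri a \<odot> A \<odot> Z \<odot> J \<odot> ri a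
      - cc \<odot> (A \<odot> Z \<odot> ri a \<odot> J \<odot> ri a + A \<odot> Z \<odot> lam \<odot> J \<odot> ri a - A \<odot> Z)"
    using a by (simp add: AL Z_r[symmetric] hecke_split)
  finally have "Dprod (Suc a) \<odot> Lfactor (Suc (Suc a)) = P \<odot> A \<odot> ri a \<odot> A \<odot> Z \<odot> J \<odot> ri a"
    using cc_lam_cancel[of "A \<odot> Z" "J \<odot> ri a"]
    by (simp add: mul_distrib_left mul_diff_left algebra_simps)
  then show ?thesis
    unfolding P_def A_def Z_def J_def .
qed

lemma exchange_relation:
  "a + 1 \<le> n \<Longrightarrow> Dprod a \<odot> Lfactor (Suc a) = barred (M1 \<odot> D1) (Suc a) \<odot> Dprod a \<odot> jm_inv (Suc a)"
proof (induction a)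
  case 0
  then show ?case
    by (simp add: Lfactor_def nrm_add)
next
  case (Suc a)
  then show ?case
    using exchange_step_lhs exchange_step_rhs by simp
qed

lemma commute_Lfactor_r: "j + 3 \<le> k \<Longrightarrow> k \<le> n \<Longrightarrow> commute (Lfactor k) (r j)"
proof -
  assume jk: "j + 3 \<le> k" "k \<le> n"
  have "commute (barred (M1 \<odot> D1) k) (r j)"
    using jk first_factor_M1 first_factor_D1 by (intro commute_barred_r_below first_factor_mul)
  moreover have "commute (jm_inv k - one) (r j)"
    using jk by (intro commute_diff commute_jm_inv_r_below commute_sym[OF commute_one]) auto
  then have "commute (cc \<odot> (jm_inv k - one)) (r j)"
    unfolding commute_def by (metis mul_assoc cc_central)
  ultimately show ?thesis
    unfolding Lfactor_def by (rule commute_add)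
qed

lemma commute_prodl_jm_inv:
  assumes "nrm y = y" "\<And>j. j + 3 \<le> m \<Longrightarrow> commute y (r j)" "m \<le> n"
  shows "commute y (prodl (map jm_inv [1..<m]))"
proof (rule commute_prodl)
  fix x
  assume "x \<in> set (map jm_inv [1..<m])"
  then obtain k where "x = jm_inv k" "k < m"
    by auto
  then show "commute y x"
    using assms by (auto intro: commute_jm_inv)
qed (rule assms(1))

lemma product_formula:
  "1 \<le> m \<Longrightarrow> m \<le> n \<Longrightarrow> M1 \<odot> D1 \<odot> prodl (map Lfactor [2..<m+1])
     = prodl (map (barred M1) [1..<m+1]) \<odot> Dprod m \<odot> prodl (map jm_inv [1..<m+1])"
proof (induction m rule: nat_induct_at_least)
  case base
  show ?case
    by simp
next
  case (Suc m)
  define Mp where "Mp = prodl (map (barred M1) [1..<m+1])"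
  define Jp where "Jp = prodl (map jm_inv [1..<m+1])"
  have L_Jp: "commute (Lfactor (Suc m)) Jp"
    unfolding Jp_def using Suc.prems by (intro commute_prodl_jm_inv commute_Lfactor_r) auto
  have J_Jp: "commute (jm_inv (Suc m)) Jp"
    unfolding Jp_def using Suc.prems by (intro commute_prodl_jm_inv commute_jm_inv_r_below) auto
  have "M1 \<odot> D1 \<odot> prodl (map Lfactor [2..<Suc m+1])
      = (M1 \<odot> D1 \<odot> prodl (map Lfactor [2..<m+1])) \<odot> Lfactor (Suc m)"
    using Suc.hyps by (simp add: prodl_snoc)
  also have "\<dots> = Mp \<odot> Dprod m \<odot> Jp \<odot> Lfactor (Suc m)"
    using Suc unfolding Mp_def Jp_def by simp
  also have "\<dots> = Mp \<odot> Dprod m \<odot> Lfactor (Suc m) \<odot> Jp"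
    using L_Jp unfolding commute_def by simp
  also have "\<dots> = Mp \<odot> barred (M1 \<odot> D1) (Suc m) \<odot> Dprod m \<odot> jm_inv (Suc m) \<odot> Jp"
    using mul_eq_extend[OF exchange_relation, of m Jp] Suc.prems by simp
  also have "\<dots> = Mp \<odot> barred M1 (Suc m) \<odot> barred D1 (Suc m) \<odot> Dprod m \<odot> Jp \<odot> jm_inv (Suc m)"
    using J_Jp Suc.prems unfolding commute_def by (simp add: barred_mul)
  also have "\<dots> = prodl (map (barred M1) [1..<Suc m+1]) \<odot> Dprod (Suc m) \<odot>
      prodl (map jm_inv [1..<Suc m+1])"
    unfolding Mp_def Jp_def by (simp add: prodl_snoc)
  finally show ?case .
qed

end

section \<open>Tensor matrices on genuine multi-indices\<close>

lemma finite_idx [simp]: "finite (idx N n)"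
proof -
  have "idx N n = {xs. set xs \<subseteq> {..<N} \<and> length xs = n}"
    unfolding idx_def by auto
  then show ?thesis
    using finite_lists_length_eq[of "{..<N}" n] by simp
qed

lemma length_idx: "I \<in> idx N n \<Longrightarrow> length I = n"
  unfolding idx_def by simp

definition restr :: "nat \<Rightarrow> nat \<Rightarrow> 'a::zero tmat \<Rightarrow> 'a tmat" where
  "restr N n X = (\<lambda>I J. if I \<in> idx N n \<and> J \<in> idx N n then X I J else 0)"

definition rmul :: "nat \<Rightarrow> nat \<Rightarrow> 'a::semiring_0 tmat \<Rightarrow> 'a tmat \<Rightarrow> 'a tmat" where
  "rmul N n X Y = restr N n (tmul N n X Y)"

lemma teq_iff_restr_eq: "teq N n X Y \<longleftrightarrow> restr N n X = restr N n Y"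
  unfolding teq_def restr_def by (auto simp: fun_eq_iff)

lemma restr_cong:
  "(\<And>I J. I \<in> idx N n \<Longrightarrow> J \<in> idx N n \<Longrightarrow> X I J = Y I J) \<Longrightarrow> restr N n X = restr N n Y"
  unfolding restr_def by (simp add: fun_eq_iff)

lemma restr_idem [simp]: "restr N n (restr N n X) = restr N n X"
  unfolding restr_def by (simp add: fun_eq_iff)

lemma restr_add: "restr N n (X + Y) = restr N n X + restr N n (Y :: 'a::monoid_add tmat)"
  unfolding restr_def by (simp add: fun_eq_iff)

lemma restr_diff: "restr N n (X - Y) = restr N n X - restr N n (Y :: 'a::group_add tmat)"
  unfolding restr_def by (simp add: fun_eq_iff)

lemma restr_rmul [simp]: "restr N n (rmul N n X Y) = rmul N n X Y"
  unfolding rmul_def by simp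

lemma rmul_restr_left [simp]: "rmul N n (restr N n X) Y = rmul N n X Y"
  unfolding rmul_def tmul_def by (rule restr_cong, rule sum.cong) (auto simp: restr_def)

lemma rmul_restr_right [simp]: "rmul N n X (restr N n Y) = rmul N n X Y"
  unfolding rmul_def tmul_def by (rule restr_cong, rule sum.cong) (auto simp: restr_def)

lemma restr_tmul: "restr N n (tmul N n X Y) = rmul N n (restr N n X) (restr N n Y)"
  by (simp add: rmul_def[symmetric])

lemma tmul_assoc: "tmul N n (tmul N n X Y) Z = tmul N n X (tmul N n Y Z)"
proof (intro ext)
  fix I L
  have "tmul N n (tmul N n X Y) Z I L = (\<Sum>K\<in>idx N n. \<Sum>J\<in>idx N n. X I J * Y J K * Z K L)"
    unfolding tmul_def by (simp add: sum_distrib_right)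
  also have "\<dots> = (\<Sum>J\<in>idx N n. \<Sum>K\<in>idx N n. X I J * Y J K * Z K L)"
    by (rule sum.swap)
  also have "\<dots> = tmul N n X (tmul N n Y Z) I L"
    unfolding tmul_def by (simp add: sum_distrib_left mult.assoc)
  finally show "tmul N n (tmul N n X Y) Z I L = tmul N n X (tmul N n Y Z) I L" .
qed

lemma rmul_assoc: "rmul N n (rmul N n X Y) Z = rmul N n X (rmul N n Y Z)"
  by (metis rmul_def rmul_restr_left rmul_restr_right tmul_assoc)

lemma tmul_tid_left: "I \<in> idx N n \<Longrightarrow> tmul N n tid X I K = (X I K :: 'a::semiring_1)"
  unfolding tmul_def tid_def by (simp add: if_distrib if_distribR sum.delta cong: if_cong)

lemma tmul_tid_right: "K \<in> idx N n \<Longrightarrow> tmul N n X tid I K = (X I K :: 'a::semiring_1)"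
  unfolding tmul_def tid_def by (simp add: if_distrib if_distribR sum.delta' cong: if_cong)

lemma rmul_tid_left [simp]: "rmul N n tid X = restr N n (X :: 'a::semiring_1 tmat)"
  unfolding rmul_def by (rule restr_cong) (simp add: tmul_tid_left)

lemma rmul_tid_right [simp]: "rmul N n X tid = restr N n (X :: 'a::semiring_1 tmat)"
  unfolding rmul_def by (rule restr_cong) (simp add: tmul_tid_right)

lemma rmul_add_left: "rmul N n (X + Y) Z = rmul N n X Z + rmul N n Y Z"
  unfolding rmul_def restr_add[symmetric]
  by (rule restr_cong) (simp add: tmul_def distrib_right sum.distrib)

lemma rmul_add_right: "rmul N n X (Y + Z) = rmul N n X Y + rmul N n X Z"
  unfolding rmul_def restr_add[symmetric]
  by (rule restr_cong) (simp add: tmul_def distrib_left sum.distrib)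

definition scalar :: "nat \<Rightarrow> nat \<Rightarrow> 'a::ring_1 \<Rightarrow> 'a tmat" where
  "scalar N n s = restr N n (\<lambda>I J. s * tid I J)"

lemma rmul_scalar_left: "rmul N n (scalar N n s) X = restr N n (tsmul s X)"
  unfolding rmul_def
proof (rule restr_cong)
  fix I K
  assume I: "I \<in> idx N n"
  have "tmul N n (scalar N n s) X I K = s * tmul N n tid X I K"
    unfolding tmul_def scalar_def restr_def sum_distrib_left
    by (rule sum.cong) (auto simp: I mult.assoc)
  then show "tmul N n (scalar N n s) X I K = tsmul s X I K"
    using I by (simp add: tmul_tid_left tsmul_def)
qed

lemma rmul_scalar_right: "rmul N n X (scalar N n s) = restr N n (\<lambda>I J. X I J * s)"
  unfolding rmul_def
proof (rule restr_cong)
  fix I K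
  assume K: "K \<in> idx N n"
  have "tmul N n X (scalar N n s) I K = tmul N n X tid I K * s"
    unfolding tmul_def scalar_def restr_def sum_distrib_right
    by (rule sum.cong) (auto simp: K tid_def)
  then show "tmul N n X (scalar N n s) I K = X I K * s"
    using K by (simp add: tmul_tid_right)
qed

lemma restr_tsmul: "restr N n (tsmul s X) = rmul N n (scalar N n s) (restr N n X)"
  by (simp add: rmul_scalar_left)

lemma tadd_eq_plus: "tadd X Y = X + Y"
  unfolding tadd_def by (simp add: fun_eq_iff)

lemma tminus_eq_minus: "tminus X Y = X - Y"
  unfolding tminus_def by (simp add: fun_eq_iff)

section \<open>Operators acting in some of the tensor factors\<close>

definition agree_off :: "nat set \<Rightarrow> nat list \<Rightarrow> nat list \<Rightarrow> bool" where
  "agree_off S I J \<longleftrightarrow> (\<forall>p<length I. p \<notin> S \<longrightarrow> I ! p = J ! p)"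

lemma agree_off_trans:
  "length I = length J \<Longrightarrow> agree_off S I J \<Longrightarrow> agree_off S J K \<Longrightarrow> agree_off S I K"
  unfolding agree_off_def by auto

lemma agree_off_sym: "length I = length J \<Longrightarrow> agree_off S I J \<Longrightarrow> agree_off S J I"
  unfolding agree_off_def by auto

definition local_op :: "nat set \<Rightarrow> 'a::zero tmat \<Rightarrow> 'a tmat" where
  "local_op S F I J = (if agree_off S I J then F I J else 0)"

definition depends_only_on :: "nat set \<Rightarrow> 'a tmat \<Rightarrow> bool" where
  "depends_only_on S F \<longleftrightarrow>
     (\<forall>I J I' J'. (\<forall>p\<in>S. I ! p = I' ! p \<and> J ! p = J' ! p) \<longrightarrow> F I J = F I' J')"

definition interpolate :: "nat set \<Rightarrow> nat list \<Rightarrow> nat list \<Rightarrow> nat list" where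
  "interpolate S I K = map (\<lambda>p. if p \<in> S then K ! p else I ! p) [0..<length I]"

lemma agree_off_interpolate_iff:
  assumes "S \<inter> T = {}" "length J = length I" "length K = length I"
  shows "agree_off S I J \<and> agree_off T J K \<longleftrightarrow> agree_off (S \<union> T) I K \<and> J = interpolate S I K"
proof
  assume *: "agree_off S I J \<and> agree_off T J K"
  then have "agree_off (S \<union> T) I K"
    using assms unfolding agree_off_def by auto
  moreover have "J = interpolate S I K"
  proof (rule nth_equalityI)
    show "length J = length (interpolate S I K)"
      using assms by (simp add: interpolate_def)
    show "J ! p = interpolate S I K ! p" if "p < length J" for p
      using * that assms unfolding agree_off_def interpolate_def by auto
  qed
  ultimately show "agree_off (S \<union> T) I K \<and> J = interpolate S I K" ..
next
  assume "agree_off (S \<union> T) I K \<and> J = interpolate S I K"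
  then show "agree_off S I J \<and> agree_off T J K"
    using assms unfolding agree_off_def interpolate_def by auto
qed
lemma tmul_local_op_disjoint:
  assumes ST: "S \<inter> T = {}" "S \<union> T \<subseteq> {..<n}"
    and F: "depends_only_on S F" and G: "depends_only_on T G"
    and I: "I \<in> idx N n" and K: "K \<in> idx N n"
  shows "tmul N n (local_op S F) (local_op T G) I K
       = (if agree_off (S \<union> T) I K then F I K * G I K else (0::'a::semiring_0))"
proof -
  let ?J = "interpolate S I K"
  have J: "?J \<in> idx N n"
    using I K unfolding interpolate_def idx_def by (auto simp: subset_iff)
  have J_nth: "p < n \<Longrightarrow> ?J ! p = (if p \<in> S then K ! p else I ! p)" for p
    using I unfolding interpolate_def by (simp add: length_idx)
  have "tmul N n (local_op S F) (local_op T G) I K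
      = (\<Sum>J\<in>idx N n. if agree_off (S \<union> T) I K \<and> J = ?J then F I J * G J K else 0)"
    unfolding tmul_def local_op_def
  proof (rule sum.cong)
    fix J
    assume "J \<in> idx N n"
    then have "agree_off S I J \<and> agree_off T J K \<longleftrightarrow> agree_off (S \<union> T) I K \<and> J = ?J"
      using I K by (intro agree_off_interpolate_iff[OF ST(1)]) (simp_all add: length_idx)
    then show "(if agree_off S I J then F I J else 0) * (if agree_off T J K then G J K else 0)
        = (if agree_off (S \<union> T) I K \<and> J = ?J then F I J * G J K else 0)"
      by (cases "agree_off S I J"; cases "agree_off T J K") auto
  qed simp
  also have "\<dots> = (if agree_off (S \<union> T) I K then F I ?J * G ?J K else 0)"
    using J by (cases "agree_off (S \<union> T) I K") (simp_all add: sum.delta')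
  also have "F I ?J = F I K"
    using F J_nth ST unfolding depends_only_on_def by (metis lessThan_iff subset_iff UnI1)
  also have "G ?J K = G I K"
    using G J_nth ST unfolding depends_only_on_def
    by (metis disjoint_iff lessThan_iff subset_iff UnI2)
  finally show ?thesis .
qed

lemma rmul_local_op_commute:
  assumes "S \<inter> T = {}" "S \<union> T \<subseteq> {..<n}" "depends_only_on S F" "depends_only_on T G"
    and "\<And>I K. F I K * G I K = G I K * (F I K :: 'a::semiring_0)"
  shows "rmul N n (local_op S F) (local_op T G) = rmul N n (local_op T G) (local_op S F)"
  unfolding rmul_def
proof (rule restr_cong)
  fix I K
  assume "I \<in> idx N n" "K \<in> idx N n"
  moreover have "T \<inter> S = {}" "T \<union> S \<subseteq> {..<n}"
    using assms by auto
  ultimately show "tmul N n (local_op S F) (local_op T G) I K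
      = tmul N n (local_op T G) (local_op S F) I K"
    using assms by (simp add: tmul_local_op_disjoint Un_commute)
qed

lemma tmap_local_op: "f 0 = 0 \<Longrightarrow> tmap f (local_op S F) = local_op S (\<lambda>I J. f (F I J))"
  unfolding tmap_def local_op_def by (simp add: fun_eq_iff)

definition window :: "nat \<Rightarrow> nat \<Rightarrow> nat list \<Rightarrow> nat list" where
  "window k m I = take m (drop k I)"

definition splice :: "nat \<Rightarrow> nat \<Rightarrow> nat list \<Rightarrow> nat list \<Rightarrow> nat list" where
  "splice k m I V = take k I @ V @ drop (k + m) I"

lemma window_idx: "I \<in> idx N n \<Longrightarrow> k + m \<le> n \<Longrightarrow> window k m I \<in> idx N m"
  unfolding idx_def window_def using set_take_subset set_drop_subset by fastforce

lemma nth_window: "p < m \<Longrightarrow> k + m \<le> length I \<Longrightarrow> window k m I ! p = I ! (k + p)"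
  unfolding window_def by simp

lemma window_splice: "length V = m \<Longrightarrow> k \<le> length I \<Longrightarrow> window k m (splice k m I V) = V"
  unfolding window_def splice_def by simp

lemma splice_idx: "I \<in> idx N n \<Longrightarrow> k + m \<le> n \<Longrightarrow> V \<in> idx N m \<Longrightarrow> splice k m I V \<in> idx N n"
  unfolding idx_def splice_def using set_take_subset set_drop_subset by fastforce

lemma agree_off_splice:
  "I \<in> idx N n \<Longrightarrow> k + m \<le> n \<Longrightarrow> V \<in> idx N m \<Longrightarrow> agree_off {k..<k+m} I (splice k m I V)"
  unfolding agree_off_def idx_def splice_def by (auto simp: nth_append)

lemma splice_window:
  "I \<in> idx N n \<Longrightarrow> J \<in> idx N n \<Longrightarrow> k + m \<le> n \<Longrightarrow> agree_off {k..<k+m} I J \<Longrightarrow>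
   splice k m I (window k m J) = J"
  unfolding agree_off_def idx_def splice_def window_def
  by (intro nth_equalityI) (auto simp: nth_append)

lemma bij_betw_splice:
  assumes I: "I \<in> idx N n" and km: "k + m \<le> n"
  shows "bij_betw (splice k m I) (idx N m) {J \<in> idx N n. agree_off {k..<k+m} I J}"
proof (rule bij_betw_byWitness[where f' = "window k m"])
  show "\<forall>V\<in>idx N m. window k m (splice k m I V) = V"
    using I km by (auto simp: length_idx window_splice)
  show "\<forall>J\<in>{J \<in> idx N n. agree_off {k..<k+m} I J}. splice k m I (window k m J) = J"
    using I km splice_window by blast
  show "splice k m I ` idx N m \<subseteq> {J \<in> idx N n. agree_off {k..<k+m} I J}"
    using I km splice_idx agree_off_splice by blast
  show "window k m ` {J \<in> idx N n. agree_off {k..<k+m} I J} \<subseteq> idx N m"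
    using km window_idx by blast
qed

definition embed_at :: "nat \<Rightarrow> nat \<Rightarrow> 'a::zero tmat \<Rightarrow> 'a tmat" where
  "embed_at k m X = local_op {k..<k+m} (\<lambda>I J. X (window k m I) (window k m J))"

lemma tmul_embed_at:
  assumes km: "k + m \<le> n" and I: "I \<in> idx N n" and K: "K \<in> idx N n"
  shows "tmul N n (embed_at k m X) (embed_at k m Y) I K
       = embed_at k m (tmul N m X (Y :: 'a::semiring_0 tmat)) I K"
proof (cases "agree_off {k..<k+m} I K")
  case True
  let ?S = "{k..<k+m}" and ?w = "window k m"
  let ?g = "\<lambda>J. X (?w I) (?w J) * Y (?w J) (?w K)"
  let ?T = "{J \<in> idx N n. agree_off ?S I J}"
  have "tmul N n (embed_at k m X) (embed_at k m Y) I K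
      = (\<Sum>J\<in>idx N n. if agree_off ?S I J then ?g J else 0)"
    unfolding tmul_def
  proof (rule sum.cong)
    fix J
    assume J: "J \<in> idx N n"
    have "agree_off ?S J K" if "agree_off ?S I J"
      using agree_off_trans[OF _ agree_off_sym[OF _ that] True] I J by (simp add: length_idx)
    then show "embed_at k m X I J * embed_at k m Y J K = (if agree_off ?S I J then ?g J else 0)"
      unfolding embed_at_def local_op_def by simp
  qed simp
  also have "\<dots> = sum ?g ?T"
    by (simp add: sum.inter_filter)
  also have "\<dots> = (\<Sum>V\<in>idx N m. ?g (splice k m I V))"
    using bij_betw_splice[OF I km] by (rule sum.reindex_bij_betw[symmetric])
  also have "\<dots> = (\<Sum>V\<in>idx N m. X (?w I) V * Y V (?w K))"
    using I km by (intro sum.cong refl) (simp add: length_idx window_splice)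
  also have "\<dots> = embed_at k m (tmul N m X Y) I K"
    using True unfolding embed_at_def local_op_def tmul_def by simp
  finally show ?thesis .
next
  case False
  have "embed_at k m X I J * embed_at k m Y J K = 0" if "J \<in> idx N n" for J
    using False agree_off_trans[of I J _ K] that I unfolding embed_at_def local_op_def
    by (auto simp: length_idx)
  then show ?thesis
    using False unfolding tmul_def embed_at_def local_op_def by simp
qed

lemma restr_embed_at_tmul:
  "k + m \<le> n \<Longrightarrow> restr N n (embed_at k m (tmul N m X (Y :: 'a::semiring_0 tmat)))
     = rmul N n (restr N n (embed_at k m X)) (restr N n (embed_at k m Y))"
  unfolding rmul_restr_left rmul_restr_right unfolding rmul_def
  by (rule restr_cong) (simp add: tmul_embed_at)

lemma restr_embed_at_teq:
  "teq N m X Y \<Longrightarrow> k + m \<le> n \<Longrightarrow> restr N n (embed_at k m X) = restr N n (embed_at k m Y)"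
  by (rule restr_cong) (simp add: embed_at_def local_op_def teq_def window_idx)

lemma embed_at_add:
  "embed_at k m (X + Y) = embed_at k m X + embed_at k m (Y :: 'a::monoid_add tmat)"
  unfolding embed_at_def local_op_def by (simp add: fun_eq_iff)

lemma embed_at_tsmul: "embed_at k m (tsmul s X) = tsmul s (embed_at k m (X :: 'a::mult_zero tmat))"
  unfolding embed_at_def local_op_def tsmul_def by (simp add: fun_eq_iff)

lemma tmap_embed_at: "f 0 = 0 \<Longrightarrow> tmap f (embed_at k m X) = embed_at k m (tmap f X)"
  unfolding embed_at_def local_op_def tmap_def by (simp add: fun_eq_iff)

lemma agree_off_window_iff:
  assumes km: "k + m \<le> length I" and len: "length J = length I" and S: "S \<subseteq> {..<m}"
  shows "agree_off {k..<k+m} I J \<and> agree_off S (window k m I) (window k m J)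
     \<longleftrightarrow> agree_off ((+) k ` S) I J"
proof
  assume *: "agree_off {k..<k+m} I J \<and> agree_off S (window k m I) (window k m J)"
  show "agree_off ((+) k ` S) I J"
    unfolding agree_off_def
  proof (intro allI impI)
    fix p
    assume p: "p < length I" "p \<notin> (+) k ` S"
    show "I ! p = J ! p"
    proof (cases "p \<in> {k..<k+m}")
      case True
      then have "p - k \<notin> S" "p - k < m"
        using p by (auto simp: image_iff)
      then show ?thesis
        using * True km len unfolding agree_off_def by (auto simp: nth_window window_def)
    qed (use * p in \<open>auto simp: agree_off_def\<close>)
  qed
next
  assume *: "agree_off ((+) k ` S) I J"
  have "p \<notin> (+) k ` S" if "p \<notin> {k..<k+m}" for p
    using that S by auto
  then have "agree_off {k..<k+m} I J"
    using * unfolding agree_off_def by blast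
  moreover have "agree_off S (window k m I) (window k m J)"
    unfolding agree_off_def
  proof (intro allI impI)
    fix p
    assume "p < length (window k m I)" "p \<notin> S"
    moreover from this have "k + p \<notin> (+) k ` S"
      by auto
    ultimately show "window k m I ! p = window k m J ! p"
      using * km len unfolding agree_off_def by (simp add: nth_window window_def)
  qed
  ultimately show "agree_off {k..<k+m} I J \<and> agree_off S (window k m I) (window k m J)" ..
qed

lemma restr_embed_at_local_op:
  assumes "k + m \<le> n" "S \<subseteq> {..<m}"
  shows "restr N n (embed_at k m (local_op S F))
       = restr N n (local_op ((+) k ` S) (\<lambda>I J. F (window k m I) (window k m J)))"
proof (rule restr_cong)
  fix I J
  assume "I \<in> idx N n" "J \<in> idx N n"
  then have "agree_off {k..<k+m} I J \<and> agree_off S (window k m I) (window k m J)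
      \<longleftrightarrow> agree_off ((+) k ` S) I J"
    using assms by (intro agree_off_window_iff) (simp_all add: length_idx)
  then show "embed_at k m (local_op S F) I J
      = local_op ((+) k ` S) (\<lambda>I J. F (window k m I) (window k m J)) I J"
    unfolding embed_at_def local_op_def by auto
qed

lemma op2_eq_local_op:
  "op2 X j = local_op {j, Suc j} (\<lambda>I J. X (I ! j) (I ! Suc j) (J ! j) (J ! Suc j))"
  unfolding op2_def local_op_def agree_off_def by (simp add: fun_eq_iff)

lemma op1_teq_local_op: "1 \<le> m \<Longrightarrow> teq N m (op1 A) (local_op {0} (\<lambda>I J. A (I ! 0) (J ! 0)))"
  unfolding teq_def op1_def local_op_def agree_off_def
  by (auto simp: length_idx list_eq_iff_nth_eq nth_tl hd_conv_nth gr0_conv_Suc)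

lemma tid_teq_local_op: "teq N m tid (local_op {} (\<lambda>_ _. 1))"
  unfolding teq_def tid_def local_op_def agree_off_def
  by (auto simp: length_idx list_eq_iff_nth_eq)

lemma restr_embed_at_op2:
  assumes "k \<le> j" "j + 2 \<le> k + m" "k + m \<le> n"
  shows "restr N n (embed_at k m (op2 X (j - k))) = restr N n (op2 X j)"
proof -
  let ?F = "\<lambda>I J. X (I ! (j - k)) (I ! Suc (j - k)) (J ! (j - k)) (J ! Suc (j - k))"
  have "restr N n (embed_at k m (op2 X (j - k)))
      = restr N n (local_op ((+) k ` {j - k, Suc (j - k)})
          (\<lambda>I J. ?F (window k m I) (window k m J)))"
    unfolding op2_eq_local_op by (rule restr_embed_at_local_op) (use assms in auto)
  also have "(+) k ` {j - k, Suc (j - k)} = {j, Suc j}"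
    using assms(1) by auto
  also have "restr N n (local_op {j, Suc j} (\<lambda>I J. ?F (window k m I) (window k m J)))
      = restr N n (op2 X j)"
    unfolding op2_eq_local_op using assms
    by (intro restr_cong) (simp add: local_op_def nth_window length_idx)
  finally show ?thesis .
qed

lemma restr_embed_at_op1:
  assumes "1 \<le> m" "m \<le> n"
  shows "restr N n (embed_at 0 m (op1 A)) = restr N n (op1 A)"
proof -
  let ?F = "\<lambda>I J. A (I ! 0) (J ! 0)"
  have "restr N n (embed_at 0 m (op1 A)) = restr N n (embed_at 0 m (local_op {0} ?F))"
    using assms by (intro restr_embed_at_teq op1_teq_local_op) auto
  also have "\<dots> = restr N n (local_op {0} (\<lambda>I J. ?F (window 0 m I) (window 0 m J)))"
    using restr_embed_at_local_op[of 0 m n "{0}"] assms by simp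
  also have "\<dots> = restr N n (local_op {0} ?F)"
    using assms by (intro restr_cong) (simp add: local_op_def nth_window length_idx)
  also have "\<dots> = restr N n (op1 A)"
    using op1_teq_local_op[of n N A] assms by (simp add: teq_iff_restr_eq)
  finally show ?thesis .
qed

lemma restr_embed_at_tid:
  assumes "k + m \<le> n"
  shows "restr N n (embed_at k m tid) = restr N n (tid :: 'a::{zero,one} tmat)"
proof -
  have "restr N n (embed_at k m tid) = restr N n (embed_at k m (local_op {} (\<lambda>_ _. 1)))"
    using assms by (intro restr_embed_at_teq tid_teq_local_op)
  also have "\<dots> = restr N n (local_op {} (\<lambda>_ _. 1))"
    using restr_embed_at_local_op[of k m n "{}"] assms by simp
  also have "\<dots> = restr N n tid"
    by (metis teq_iff_restr_eq tid_teq_local_op)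
  finally show ?thesis .
qed

lemma idx_one: "idx N 1 = (\<lambda>c. [c]) ` {..<N}"
  by (auto simp: idx_def length_Suc_conv)

lemma op1_tmul_one: "teq N 1 (tmul N 1 (op1 A) (op1 B)) (op1 (\<lambda>i j. \<Sum>k<N. A i k * B k j))"
  unfolding teq_def
proof (intro ballI)
  fix I K
  assume "I \<in> idx N 1" "K \<in> idx N 1"
  then obtain a b where ab: "I = [a]" "K = [b]"
    unfolding idx_one by auto
  have "tmul N 1 (op1 A) (op1 B) I K = (\<Sum>c<N. op1 A [a] [c] * op1 B [c] [b])"
    unfolding tmul_def idx_one ab by (subst sum.reindex) (auto simp: inj_on_def)
  then show "tmul N 1 (op1 A) (op1 B) I K = op1 (\<lambda>i j. \<Sum>k<N. A i k * B k j) I K"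
    unfolding ab op1_def by simp
qed

lemma rmul_op1:
  assumes "1 \<le> n"
  shows "rmul N n (op1 A) (op1 B) = restr N n (op1 (\<lambda>i j. \<Sum>k<N. A i k * B k j))"
proof -
  have "rmul N n (op1 A) (op1 B) = restr N n (embed_at 0 1 (tmul N 1 (op1 A) (op1 B)))"
    using assms by (simp add: restr_embed_at_tmul restr_embed_at_op1)
  also have "\<dots> = restr N n (embed_at 0 1 (op1 (\<lambda>i j. \<Sum>k<N. A i k * B k j)))"
    using assms op1_tmul_one by (intro restr_embed_at_teq) auto
  also have "\<dots> = restr N n (op1 (\<lambda>i j. \<Sum>k<N. A i k * B k j))"
    using assms by (simp add: restr_embed_at_op1)
  finally show ?thesis .
qed

section \<open>The tensor-matrix model\<close>

definition Rop :: "nat \<Rightarrow> nat \<Rightarrow> (complex \<Rightarrow> 'a::ring_1) \<Rightarrow> (nat \<Rightarrow> nat \<Rightarrow> nat \<Rightarrow> nat \<Rightarrow> complex)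
    \<Rightarrow> nat \<Rightarrow> 'a tmat" where
  "Rop N n sc X k = restr N n (tmap sc (op2 X k))"

lemma skew_inv_hecke_relations:
  assumes "skew_inv_hecke N q R Ri"
  shows "teq N 2 (tmul N 2 (op2 R 0) (op2 Ri 0)) tid"
    and "teq N 2 (tmul N 2 (op2 Ri 0) (op2 R 0)) tid"
    and "teq N 3 (tmul N 3 (op2 R 0) (tmul N 3 (op2 R 1) (op2 R 0)))
                 (tmul N 3 (op2 R 1) (tmul N 3 (op2 R 0) (op2 R 1)))"
    and "teq N 2 (tmul N 2 (op2 R 0) (op2 R 0)) (tadd tid (tsmul (q - inverse q) (op2 R 0)))"
  using assms unfolding skew_inv_hecke_def by blast+

context
  fixes sc :: "complex \<Rightarrow> 'a::ring_1"
  assumes sc: "complex_alg sc"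
begin

lemma sc_add [simp]: "sc (x + y) = sc x + sc y"
  and sc_mult [simp]: "sc (x * y) = sc x * sc y"
  and sc_central: "sc x * a = a * sc x"
  using sc unfolding complex_alg_def by blast+

lemma sc_0 [simp]: "sc 0 = 0"
  using sc_add[of 0 0] by simp

lemma sc_diff: "sc (x - y) = sc x - sc y"
  by (metis sc_add diff_add_cancel eq_diff_eq)

lemma sc_sum: "sc (sum f A) = (\<Sum>x\<in>A. sc (f x))"
  by (induction A rule: infinite_finite_induct) auto

lemma tmap_tmul: "tmap sc (tmul N n X Y) = tmul N n (tmap sc X) (tmap sc Y)"
  unfolding tmap_def tmul_def by (simp add: fun_eq_iff sc_sum)

lemma tmap_restr: "tmap sc (restr N n X) = restr N n (tmap sc X)"
  unfolding tmap_def restr_def by (simp add: fun_eq_iff)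

lemma tmap_tid [simp]: "tmap sc tid = tid"
  using sc unfolding complex_alg_def tmap_def tid_def by (simp add: fun_eq_iff)

lemma tmap_tadd: "tmap sc (tadd X Y) = tmap sc X + tmap sc Y"
  unfolding tmap_def tadd_def by (simp add: fun_eq_iff sc_add)

lemma tmap_diff: "tmap sc (X - Y) = tmap sc X - tmap sc Y"
  unfolding tmap_def by (simp add: fun_eq_iff sc_diff)

lemma tmap_tsmul: "tmap sc (tsmul c X) = tsmul (sc c) (tmap sc X)"
  unfolding tmap_def tsmul_def by (simp add: fun_eq_iff sc_mult)

lemma teq_tmap: "teq N n X Y \<Longrightarrow> teq N n (tmap sc X) (tmap sc Y)"
  unfolding teq_def tmap_def by simp

lemma restr_embed_at_Rop:
  "k \<le> j \<Longrightarrow> j + 2 \<le> k + m \<Longrightarrow> k + m \<le> n \<Longrightarrow>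
   restr N n (embed_at k m (tmap sc (op2 X (j - k)))) = Rop N n sc X j"
  unfolding Rop_def tmap_embed_at[of sc, OF sc_0, symmetric] tmap_restr[symmetric]
  by (simp add: restr_embed_at_op2)

lemma restr_embed_at_Rop_2:
    "k + 2 \<le> n \<Longrightarrow> restr N n (embed_at k 2 (tmap sc (op2 X 0))) = Rop N n sc X k"
  and restr_embed_at_Rop_3:
    "k + 3 \<le> n \<Longrightarrow> restr N n (embed_at k 3 (tmap sc (op2 X 0))) = Rop N n sc X k"
  and restr_embed_at_Rop_3_Suc:
    "k + 3 \<le> n \<Longrightarrow> restr N n (embed_at k 3 (tmap sc (op2 X 1))) = Rop N n sc X (Suc k)"
  using restr_embed_at_Rop[of k k 2 n N X] restr_embed_at_Rop[of k k 3 n N X]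
    restr_embed_at_Rop[of k "Suc k" 3 n N X]
  by simp_all

lemma Rop_eq_local_op:
  "Rop N n sc X j
     = restr N n (local_op {j, Suc j} (\<lambda>I J. sc (X (I ! j) (I ! Suc j) (J ! j) (J ! Suc j))))"
  unfolding Rop_def op2_eq_local_op tmap_local_op[of sc, OF sc_0] ..

lemma Rop_commute_far:
  "i + 2 \<le> j \<Longrightarrow> j + 2 \<le> n \<Longrightarrow>
   rmul N n (Rop N n sc X i) (Rop N n sc X j) = rmul N n (Rop N n sc X j) (Rop N n sc X i)"
  unfolding Rop_eq_local_op rmul_restr_left rmul_restr_right
  by (rule rmul_local_op_commute) (auto simp: depends_only_on_def intro: sc_central)

lemma op1_commute_Rop:
  assumes "1 \<le> j" "j + 2 \<le> n"
  shows "rmul N n (op1 A) (Rop N n sc X j) = rmul N n (Rop N n sc X j) (op1 A)"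
proof -
  let ?A = "local_op {0} (\<lambda>I J. A (I ! 0) (J ! 0))"
  let ?R = "local_op {j, Suc j} (\<lambda>I J. sc (X (I ! j) (I ! Suc j) (J ! j) (J ! Suc j)))"
  have op1: "restr N n (op1 A) = restr N n ?A"
    using op1_teq_local_op[of n N A] assms unfolding teq_iff_restr_eq by simp
  have "rmul N n (op1 A) Y = rmul N n ?A Y" "rmul N n Y (op1 A) = rmul N n Y ?A" for Y
    by (metis op1 rmul_restr_left, metis op1 rmul_restr_right)
  moreover have "rmul N n ?A ?R = rmul N n ?R ?A"
    using assms by (intro rmul_local_op_commute)
      (auto simp: depends_only_on_def intro: sc_central[symmetric])
  ultimately show ?thesis
    unfolding Rop_eq_local_op rmul_restr_left rmul_restr_right by simp
qed

lemma Rop_inverse: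
  assumes "teq N 2 (tmul N 2 (op2 X 0) (op2 Y 0)) tid" "k + 2 \<le> n"
  shows "rmul N n (Rop N n sc X k) (Rop N n sc Y k) = restr N n tid"
proof -
  have "teq N 2 (tmul N 2 (tmap sc (op2 X 0)) (tmap sc (op2 Y 0))) tid"
    using teq_tmap[OF assms(1)] by (simp add: tmap_tmul)
  then have "restr N n (embed_at k 2 (tmul N 2 (tmap sc (op2 X 0)) (tmap sc (op2 Y 0))))
      = restr N n (embed_at k 2 tid)"
    using assms(2) by (rule restr_embed_at_teq)
  then show ?thesis
    using assms(2) by (simp only: restr_embed_at_tmul restr_embed_at_Rop_2 restr_embed_at_tid)
qed

lemma Rop_braid:
  assumes "teq N 3 (tmul N 3 (op2 X 0) (tmul N 3 (op2 X 1) (op2 X 0)))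
                   (tmul N 3 (op2 X 1) (tmul N 3 (op2 X 0) (op2 X 1)))"
    and "k + 3 \<le> n"
  shows "rmul N n (Rop N n sc X k) (rmul N n (Rop N n sc X (Suc k)) (Rop N n sc X k))
       = rmul N n (Rop N n sc X (Suc k)) (rmul N n (Rop N n sc X k) (Rop N n sc X (Suc k)))"
proof -
  let ?X0 = "tmap sc (op2 X 0)" and ?X1 = "tmap sc (op2 X 1)"
  have "teq N 3 (tmul N 3 ?X0 (tmul N 3 ?X1 ?X0)) (tmul N 3 ?X1 (tmul N 3 ?X0 ?X1))"
    using teq_tmap[OF assms(1)] by (simp add: tmap_tmul)
  then have "restr N n (embed_at k 3 (tmul N 3 ?X0 (tmul N 3 ?X1 ?X0)))
      = restr N n (embed_at k 3 (tmul N 3 ?X1 (tmul N 3 ?X0 ?X1)))"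
    using assms(2) by (rule restr_embed_at_teq)
  then show ?thesis
    using assms(2)
    by (simp only: restr_embed_at_tmul restr_embed_at_Rop_3 restr_embed_at_Rop_3_Suc restr_rmul)
qed

lemma Rop_hecke:
  assumes "teq N 2 (tmul N 2 (op2 X 0) (op2 X 0)) (tadd tid (tsmul c (op2 X 0)))" "k + 2 \<le> n"
  shows "rmul N n (Rop N n sc X k) (Rop N n sc X k)
       = restr N n tid + rmul N n (scalar N n (sc c)) (Rop N n sc X k)"
proof -
  let ?X0 = "tmap sc (op2 X 0)"
  have "teq N 2 (tmul N 2 ?X0 ?X0) (tid + tsmul (sc c) ?X0)"
    using teq_tmap[OF assms(1)] by (simp add: tmap_tmul tmap_tadd tmap_tsmul)
  then have "restr N n (embed_at k 2 (tmul N 2 ?X0 ?X0))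
      = restr N n (embed_at k 2 (tid + tsmul (sc c) ?X0))"
    using assms(2) by (rule restr_embed_at_teq)
  then show ?thesis
    using assms(2)
    by (simp add: restr_embed_at_tmul restr_embed_at_Rop_2 embed_at_add restr_add
        restr_embed_at_tid embed_at_tsmul restr_tsmul)
qed

lemma weyl_rel_relations:
  assumes "weyl_rel N sc R Ri M D"
  defines "R0 \<equiv> tmap sc (op2 R 0)" and "Ri0 \<equiv> tmap sc (op2 Ri 0)"
  shows "teq N 2 (tmul N 2 Ri0 (tmul N 2 (op1 D) (tmul N 2 Ri0 (op1 D))))
                 (tmul N 2 (op1 D) (tmul N 2 Ri0 (tmul N 2 (op1 D) Ri0)))"
    and "teq N 2 (tmul N 2 (op1 D) (tmul N 2 R0 (tmul N 2 (op1 M) Ri0)))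
                 (tadd Ri0 (tmul N 2 (tmul N 2 R0 (tmul N 2 (op1 M) Ri0))
                    (tmul N 2 (op1 D) (tmul N 2 Ri0 Ri0))))"
  using assms(1) unfolding weyl_rel_def Let_def R0_def Ri0_def by (simp_all add: numeral_2_eq_2)

lemma reflection_D_restr:
  assumes "weyl_rel N sc R Ri M D" "2 \<le> n"
  defines "D1 \<equiv> restr N n (op1 D)" and "Ri0 \<equiv> Rop N n sc Ri 0"
  shows "rmul N n Ri0 (rmul N n D1 (rmul N n Ri0 D1))
       = rmul N n D1 (rmul N n Ri0 (rmul N n D1 Ri0))"
  using restr_embed_at_teq[OF weyl_rel_relations(1)[OF assms(1)], of 0 n] assms(2)
  unfolding D1_def Ri0_def
  by (simp only: restr_embed_at_tmul restr_embed_at_Rop_2 restr_embed_at_op1 restr_rmul)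

lemma weyl_restr:
  assumes "weyl_rel N sc R Ri M D" "2 \<le> n"
  defines "M1 \<equiv> restr N n (op1 M)" and "D1 \<equiv> restr N n (op1 D)"
    and "R0 \<equiv> Rop N n sc R 0" and "Ri0 \<equiv> Rop N n sc Ri 0"
  shows "rmul N n D1 (rmul N n R0 (rmul N n M1 Ri0))
       = Ri0 + rmul N n (rmul N n R0 (rmul N n M1 Ri0)) (rmul N n D1 (rmul N n Ri0 Ri0))"
  using restr_embed_at_teq[OF weyl_rel_relations(2)[OF assms(1)], of 0 n] assms(2)
  unfolding M1_def D1_def R0_def Ri0_def
  by (simp only: restr_embed_at_tmul restr_embed_at_Rop_2 restr_embed_at_op1 restr_rmul
      tadd_eq_plus embed_at_add restr_add)

end

locale weyl_model =
  fixes N n :: nat and q :: complex and R Ri :: "nat \<Rightarrow> nat \<Rightarrow> nat \<Rightarrow> nat \<Rightarrow> complex"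
    and sc :: "complex \<Rightarrow> 'a::ring_1" and M D :: "nat \<Rightarrow> nat \<Rightarrow> 'a"
  assumes hecke: "skew_inv_hecke N q R Ri"
    and sc: "complex_alg sc"
    and weyl: "weyl_rel N sc R Ri M D"
    and q: "q - inverse q \<noteq> 0"
    and n: "1 \<le> n"
begin

sublocale hecke_generators "rmul N n" "restr N n" "restr N n tid" n "Rop N n sc R" "Rop N n sc Ri"
  "scalar N n (sc (q - inverse q))"
proof unfold_locales
  show "rmul N n (rmul N n x y) z = rmul N n x (rmul N n y z)" for x y z :: "'a tmat"
    by (rule rmul_assoc)
  show "rmul N n x (y + z) = rmul N n x y + rmul N n x z" for x y z :: "'a tmat"
    by (rule rmul_add_right)
  show "rmul N n (x + y) z = rmul N n x z + rmul N n y z" for x y z :: "'a tmat"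
    by (rule rmul_add_left)
  show "restr N n (x + y) = restr N n x + restr N n y" for x y :: "'a tmat"
    by (rule restr_add)
  show "restr N n (scalar N n s) = scalar N n s" for s
    by (simp add: scalar_def)
  show "k + 2 \<le> n \<Longrightarrow> rmul N n (Rop N n sc R k) (Rop N n sc Ri k) = restr N n tid"
    and "k + 2 \<le> n \<Longrightarrow> rmul N n (Rop N n sc Ri k) (Rop N n sc R k) = restr N n tid" for k
    using skew_inv_hecke_relations[OF hecke] by (simp_all add: Rop_inverse[OF sc])
  show "k + 2 \<le> n \<Longrightarrow> rmul N n (Rop N n sc R k) (Rop N n sc R k)
      = restr N n tid + rmul N n (scalar N n (sc (q - inverse q))) (Rop N n sc R k)" for k
    by (rule Rop_hecke[OF sc skew_inv_hecke_relations(4)[OF hecke]])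
  show "k + 3 \<le> n \<Longrightarrow>
      rmul N n (Rop N n sc R k) (rmul N n (Rop N n sc R (Suc k)) (Rop N n sc R k))
      = rmul N n (Rop N n sc R (Suc k)) (rmul N n (Rop N n sc R k) (Rop N n sc R (Suc k)))" for k
    by (rule Rop_braid[OF sc skew_inv_hecke_relations(3)[OF hecke]])
  show "i + 2 \<le> j \<Longrightarrow> j + 2 \<le> n \<Longrightarrow>
      rmul N n (Rop N n sc R i) (Rop N n sc R j)
      = rmul N n (Rop N n sc R j) (Rop N n sc R i)" for i j
    by (rule Rop_commute_far[OF sc])
qed (simp_all add: Rop_def)

lemma first_factor_op1: "first_factor (restr N n (op1 A))"
  unfolding first_factor_def commute_def using op1_commute_Rop[OF sc] by simp

sublocale quantum_weyl "rmul N n" "restr N n" "restr N n tid" n "Rop N n sc R" "Rop N n sc Ri"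
  "scalar N n (sc (q - inverse q))" "restr N n (op1 M)" "restr N n (op1 D)"
  "scalar N n (sc (1 / (q - inverse q)))"
proof unfold_locales
  show "rmul N n (scalar N n (sc (1 / (q - inverse q)))) x
      = rmul N n x (scalar N n (sc (1 / (q - inverse q))))" for x
    unfolding rmul_scalar_left rmul_scalar_right tsmul_def
    by (intro arg_cong[where f = "restr N n"] ext) (rule sc_central[OF sc])
  have "sc (1 / (q - inverse q)) * sc (q - inverse q) = sc (1 / (q - inverse q) * (q - inverse q))"
    by (rule sc_mult[OF sc, symmetric])
  also have "\<dots> = 1"
    using q sc unfolding complex_alg_def by simp
  finally have "sc (1 / (q - inverse q)) * sc (q - inverse q) = 1" .
  then show "rmul N n (scalar N n (sc (1 / (q - inverse q)))) (scalar N n (sc (q - inverse q)))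
      = restr N n tid"
    unfolding rmul_scalar_left
    by (simp add: scalar_def restr_def tsmul_def mult.assoc[symmetric] fun_eq_iff)
  show "2 \<le> n \<Longrightarrow>
      rmul N n (Rop N n sc Ri 0) (rmul N n (restr N n (op1 D))
        (rmul N n (Rop N n sc Ri 0) (restr N n (op1 D))))
      = rmul N n (restr N n (op1 D)) (rmul N n (Rop N n sc Ri 0)
          (rmul N n (restr N n (op1 D)) (Rop N n sc Ri 0)))"
    by (rule reflection_D_restr[OF sc weyl])
  show "2 \<le> n \<Longrightarrow> rmul N n (restr N n (op1 D)) (barred (restr N n (op1 M)) 2)
      = Rop N n sc Ri 0 + rmul N n (barred (restr N n (op1 M)) 2)
          (rmul N n (restr N n (op1 D)) (rmul N n (Rop N n sc Ri 0) (Rop N n sc Ri 0)))"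
    using weyl_restr[OF sc weyl] by (simp add: numeral_2_eq_2)
qed (simp_all add: first_factor_op1 scalar_def)

lemma restr_bar: "restr N n (bar N n sc R Ri A k) = barred (restr N n (op1 A)) k"
  by (induction k rule: induct_nat_012) (simp_all add: restr_tmul Rop_def[symmetric])

lemma restr_Jinv: "restr N n (tmap sc (Jinv N n Ri k)) = jm_inv k"
  by (induction k rule: induct_nat_012)
    (simp_all add: tmap_tmul[OF sc] tmap_tid[OF sc] restr_tmul Rop_def[symmetric])

lemma restr_tprod: "restr N n (tprod N n Xs) = prodl (map (restr N n) Xs)"
  by (induction Xs) (simp_all add: tprod_def restr_tmul)

lemma restr_Lfactor:
  "restr N n (tadd (bar N n sc R Ri (\<lambda>i j. \<Sum>k<N. M i k * D k j) k)
      (tmap sc (tsmul (1 / (q - inverse q)) (tminus (Jinv N n Ri k) tid)))) = Lfactor k"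
proof -
  let ?c = "sc (1 / (q - inverse q))"
  have "restr N n (bar N n sc R Ri (\<lambda>i j. \<Sum>k<N. M i k * D k j) k)
      = barred (rmul N n (restr N n (op1 M)) (restr N n (op1 D))) k"
    using rmul_op1[OF n, of N M D] by (simp add: restr_bar)
  moreover have "restr N n (tmap sc (tsmul (1 / (q - inverse q)) (tminus (Jinv N n Ri k) tid)))
      = rmul N n (scalar N n ?c) (restr N n (tmap sc (Jinv N n Ri k) - tid))"
    by (simp add: tmap_tsmul[OF sc] tminus_eq_minus tmap_diff[OF sc] tmap_tid[OF sc] restr_tsmul)
  moreover have "restr N n (tmap sc (Jinv N n Ri k) - tid) = jm_inv k - restr N n tid"
    by (simp add: restr_diff restr_Jinv)
  ultimately show ?thesis
    unfolding Lfactor_def tadd_eq_plus restr_add by simp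
qed

lemma product_identity:
  "teq N n
     (tmul N n (bar N n sc R Ri (\<lambda>i j. \<Sum>k<N. M i k * D k j) 1)
        (tprod N n (map (\<lambda>k. tadd (bar N n sc R Ri (\<lambda>i j. \<Sum>k<N. M i k * D k j) k)
            (tmap sc (tsmul (1 / (q - inverse q)) (tminus (Jinv N n Ri k) tid))))
          [2..<n+1])))
     (tmul N n (tprod N n (map (\<lambda>k. bar N n sc R Ri M k) [1..<n+1]))
        (tmul N n (tprod N n (map (\<lambda>k. bar N n sc R Ri D k) (rev [1..<n+1])))
           (tprod N n (map (\<lambda>k. tmap sc (Jinv N n Ri k)) [1..<n+1]))))"
  unfolding teq_iff_restr_eq
  using product_formula[OF n order_refl]
  by (simp add: restr_tmul restr_tprod restr_bar restr_Jinv restr_Lfactor Dprod_eq_prodl comp_def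
      rmul_op1[OF n, symmetric] del: upt_Suc)

end

lemma diff_inverse_nonzero: "(q :: 'a::field) \<noteq> 0 \<Longrightarrow> q \<noteq> 1 \<Longrightarrow> q \<noteq> -1 \<Longrightarrow> q - inverse q \<noteq> 0"
  by (metis eq_neg_iff_add_eq_0 left_inverse right_minus_eq square_eq_1_iff)

theorem theorem1:
  fixes N n :: nat and q :: complex
    and R Ri :: "nat \<Rightarrow> nat \<Rightarrow> nat \<Rightarrow> nat \<Rightarrow> complex"
    and sc :: "complex \<Rightarrow> 'a::ring_1"
    and M D :: "nat \<Rightarrow> nat \<Rightarrow> 'a"
  assumes "N \<ge> 1"
    and "q \<noteq> 0" and "q \<noteq> 1" and "q \<noteq> -1" and "\<forall>k::nat. k > 0 \<longrightarrow> q ^ k \<noteq> 1"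
    and "skew_inv_hecke N q R Ri"
    and "complex_alg sc"
    and "weyl_rel N sc R Ri M D"
    and "n \<ge> 1"
  shows "(let L = (\<lambda>i j. \<Sum>k<N. M i k * D k j) in
          teq N n
            (tmul N n (bar N n sc R Ri L 1)
               (tprod N n (map (\<lambda>k. tadd (bar N n sc R Ri L k)
                   (tmap sc (tsmul (1 / (q - inverse q)) (tminus (Jinv N n Ri k) tid))))
                 [2..<n+1])))
            (tmul N n (tprod N n (map (\<lambda>k. bar N n sc R Ri M k) [1..<n+1]))
               (tmul N n (tprod N n (map (\<lambda>k. bar N n sc R Ri D k) (rev [1..<n+1])))
                  (tprod N n (map (\<lambda>k. tmap sc (Jinv N n Ri k)) [1..<n+1])))))"
proof -
  interpret weyl_model N n q R Ri sc M D
    using assms diff_inverse_nonzero[of q] by unfold_locales auto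
  show ?thesis
    unfolding Let_def by (rule product_identity)
qed

end
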